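(* Let $(X,T)$ be a topologically transitive topological dynamical system in which $X$ is a compact metric totally disconnected space, and let $0<\theta<1$. Then $\exp(2\pi i\theta)$ is a continuous eigenvalue of $T$ if and only if there exists a clopen set $U\subseteq X$ such that $1_U-\theta\cdot\mathbf 1$ is a real coboundary, i.e. $1_U-\theta\cdot \mathbf 1=F-F\circ T$ for some $F\in C(X,\mathbb R)$. Moreover, for such a clopen set $U$ one has $\mu(U)=\theta$ for every $T$-invariant Borel probability measure $\mu$ on $X$.
   Context: A topological dynamical system $(X,T)$ is a compact metric space $X$ with a homeomorphism $T$; it is topologically transitive if some point has a dense orbit. A complex number $\lambda$ is a continuous eigenvalue of $T$ if there is a continuous $f:X\to\mathbb S^1$ (equivalently a nonzero continuous $f:X\to\mathbb C$) with $f\circ T=\lambda f$. $1_U$ denotes the indicator function of $U$ and $\mathbf 1$ the constant function $1$. *)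

theory Defs
  imports "HOL-Analysis.Analysis" "HOL-Probability.Probability"
begin

definition totally_disconnected :: "'a::topological_space set \<Rightarrow> bool" where
  "totally_disconnected X \<longleftrightarrow> (\<forall>x\<in>X. connected_component_set X x = {x})"

definition orbit :: "'a set \<Rightarrow> ('a \<Rightarrow> 'a) \<Rightarrow> 'a \<Rightarrow> 'a set" where
  "orbit X T x = {(T ^^ n) x | n. True} \<union> {(inv_into X T ^^ n) x | n. True}"

definition top_transitive :: "'a::topological_space set \<Rightarrow> ('a \<Rightarrow> 'a) \<Rightarrow> bool" where
  "top_transitive X T \<longleftrightarrow> (\<exists>x\<in>X. closure (orbit X T x) = X)"

definition continuous_eigenvalue :: "'a::topological_space set \<Rightarrow> ('a \<Rightarrow> 'a) \<Rightarrow> complex \<Rightarrow> bool" where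
  "continuous_eigenvalue X T c \<longleftrightarrow>
     (\<exists>f :: 'a \<Rightarrow> complex. continuous_on X f \<and> (\<forall>x\<in>X. cmod (f x) = 1)
        \<and> (\<forall>x\<in>X. f (T x) = c * f x))"

definition clopen_in :: "'a::topological_space set \<Rightarrow> 'a set \<Rightarrow> bool" where
  "clopen_in X U \<longleftrightarrow> openin (top_of_set X) U \<and> closedin (top_of_set X) U"

definition real_coboundary :: "'a::topological_space set \<Rightarrow> ('a \<Rightarrow> 'a) \<Rightarrow> ('a \<Rightarrow> real) \<Rightarrow> bool" where
  "real_coboundary X T h \<longleftrightarrow>
     (\<exists>F :: 'a \<Rightarrow> real. continuous_on X F \<and> (\<forall>x\<in>X. h x = F x - F (T x)))"

definition invariant_borel_prob :: "'a::topological_space set \<Rightarrow> ('a \<Rightarrow> 'a) \<Rightarrow> 'a measure \<Rightarrow> bool" where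
  "invariant_borel_prob X T \<mu> \<longleftrightarrow>
     prob_space \<mu> \<and> sets \<mu> = sets (restrict_space borel X) \<and>
     T \<in> measurable \<mu> \<mu> \<and> distr \<mu> \<mu> T = \<mu>"

end

theory Submission imports Defs begin

text \<open>If \<open>f\<close> is an eigenfunction for \<open>exp(2\<pi>i\<theta>)\<close>, total disconnectedness lets one choose a
  continuous logarithm \<open>f = exp(2\<pi>i g)\<close> whose values lie in an interval of length less than
  \<open>1 + min \<theta> (1 - \<theta>)\<close>: use the principal branch on a clopen neighbourhood of \<open>f = 1\<close> and the
  branch with values in \<open>[0, 2\<pi>)\<close> on its complement. Then \<open>g \<circ> T - g - \<theta>\<close> is a continuous
  integer-valued function taking only the values \<open>0\<close> and \<open>-1\<close>, so \<open>g \<circ> T - g = \<theta> - 1\<^sub>U\<close> with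
  \<open>U\<close> clopen. Conversely, \<open>exp(2\<pi>i F)\<close> is an eigenfunction whenever \<open>1\<^sub>U - \<theta> = F - F \<circ> T\<close>.
  Integrating this identity against an invariant measure gives \<open>\<mu>(U) = \<theta>\<close>.\<close>

lemma totally_disconnected_clopen_separation:
  fixes X :: "'a::metric_space set"
  assumes "compact X" "totally_disconnected X"
    and "closedin (top_of_set X) K1" "closedin (top_of_set X) K2" "K1 \<inter> K2 = {}"
  obtains A where "A \<subseteq> X" "clopen_in X A" "K1 \<subseteq> A" "A \<inter> K2 = {}"
proof -
  have cs: "compact_space (top_of_set X)"
    using assms(1) by (simp add: compact_space_subtopology)
  have "separated_between (top_of_set X) K1 K2"
  proof (rule cut_wire_fence_theorem_gen[OF cs _ _ assms(4)])
    show "Hausdorff_space (top_of_set X) \<or> regular_space (top_of_set X) \<or> normal_space (top_of_set X)"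
      using Hausdorff_space_subtopology Hausdorff_space_euclidean by blast
    show "compactin (top_of_set X) K1"
      using assms(3) cs closedin_compact_space by blast
  next
    fix C assume "connectedin (top_of_set X) C"
    then have C: "C \<subseteq> X" "connected C" by (auto simp: connectedin_subtopology)
    have "C \<subseteq> {x}" if "x \<in> C" for x
      using connected_component_maximal[OF that C(2,1)] assms(2) that C(1)
      unfolding totally_disconnected_def by blast
    then show "disjnt C K1 \<or> disjnt C K2"
      using assms(5) by (cases "C = {}") (auto simp: disjnt_def)
  qed
  then obtain U V where "openin (top_of_set X) U" "openin (top_of_set X) V" "U \<union> V = X"
      "disjnt U V" "K1 \<subseteq> U" "K2 \<subseteq> V"
    unfolding separated_between_def by auto
  moreover have "closedin (top_of_set X) U"
  proof -
    have "X - U = V" using calculation by (auto simp: disjnt_def)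
    then show ?thesis using calculation by (auto simp: closedin_def)
  qed
  ultimately show ?thesis
    by (intro that[of U]) (auto simp: clopen_in_def disjnt_def)
qed

lemma exp_2pi_i_eq_iff:
  fixes a b :: real
  shows "exp (2 * pi * \<i> * complex_of_real a) = exp (2 * pi * \<i> * complex_of_real b) \<longleftrightarrow> a - b \<in> \<int>"
proof -
  have "exp (2 * pi * \<i> * complex_of_real a) / exp (2 * pi * \<i> * complex_of_real b)
      = exp (\<i> * complex_of_real (2 * pi * (a - b)))"
    by (simp add: exp_diff[symmetric] algebra_simps)
  then have "exp (2 * pi * \<i> * complex_of_real a) = exp (2 * pi * \<i> * complex_of_real b) \<longleftrightarrow>
        exp (\<i> * complex_of_real (2 * pi * (a - b))) = 1"
    by (metis divide_self exp_not_eq_zero nonzero_divide_eq_eq mult_1)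
  also have "\<dots> \<longleftrightarrow> (\<exists>n::int. 2 * pi * (a - b) = of_int (2 * n) * pi)"
    by (simp add: exp_eq_1)
  also have "\<dots> \<longleftrightarrow> (\<exists>n::int. a - b = of_int n)"
    by (metis (no_types, opaque_lifting) mult.commute mult.left_commute mult_cancel_left of_int_mult
        of_int_numeral pi_neq_zero zero_neq_numeral)
  finally show ?thesis by (auto simp: Ints_def)
qed

lemma unit_not_nonpos_Reals:
  assumes "cmod z = 1" "Re z > -1"
  shows "z \<notin> \<real>\<^sub>\<le>\<^sub>0"
  using assms cmod_eq_Re[of z] by (auto simp: complex_nonpos_Reals_iff)

lemma unit_not_nonneg_Reals:
  assumes "cmod z = 1" "Re z < 1"
  shows "z \<notin> \<real>\<^sub>\<ge>\<^sub>0"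
  using assms cmod_eq_Re[of z] by (auto simp: complex_nonneg_Reals_iff)

lemma abs_Arg_less_of_Re_gt_cos:
  assumes "cmod z = 1" "Re z > cos a" "0 < a" "a \<le> pi"
  shows "\<bar>Arg z\<bar> < a"
proof -
  have "z \<noteq> 0" using assms(1) by auto
  then have "cos (Arg z) = Re z" using cos_Arg assms(1) by simp
  then have "cos \<bar>Arg z\<bar> = Re z" by (simp add: abs_if)
  moreover have "\<bar>Arg z\<bar> \<le> pi" using Arg_bounded[of z] by auto
  ultimately show ?thesis using cos_mono_less_eq[of a "\<bar>Arg z\<bar>"] assms by auto
qed

lemma Arg2pi_bounds_of_Re_lt_cos:
  assumes "cmod z = 1" "Re z < cos a" "0 < a" "a \<le> pi"
  shows "a < Arg2pi z \<and> Arg2pi z < 2 * pi - a"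
proof -
  have c: "cos (Arg2pi z) = Re z" using cos_Arg2pi[of z] assms(1) by simp
  have b: "0 \<le> Arg2pi z" "Arg2pi z < 2 * pi" using Arg2pi by auto
  show ?thesis
  proof (cases "Arg2pi z \<le> pi")
    case True
    then have "a < Arg2pi z" using cos_mono_less_eq[of "Arg2pi z" a] assms c b by auto
    then show ?thesis using True assms by auto
  next
    case False
    have "cos (2 * pi - Arg2pi z) = Re z" using c by (simp add: cos_diff)
    then have "a < 2 * pi - Arg2pi z" using cos_mono_less_eq[of "2 * pi - Arg2pi z" a] assms b False by auto
    then show ?thesis using False assms by auto
  qed
qed

lemma totally_disconnected_circle_lift:
  fixes X :: "'a::metric_space set" and f :: "'a \<Rightarrow> complex"
  assumes X: "compact X" "totally_disconnected X"
    and f: "continuous_on X f" "\<forall>x\<in>X. cmod (f x) = 1"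
    and e: "0 < e" "e \<le> 1/2"
  obtains g where "continuous_on X g" "\<forall>x\<in>X. exp (2 * pi * \<i> * complex_of_real (g x)) = f x"
    "\<forall>x\<in>X. - e < g x \<and> g x < 1 - e/2"
proof -
  have Re_f: "continuous_on X (\<lambda>x. Re (f x))" using f(1) by (intro continuous_intros)
  have pi_e: "0 < pi * e" "2 * pi * e \<le> pi" using e by auto
  have cos_less: "cos (2 * pi * e) < cos (pi * e)" using e by (subst cos_mono_less_eq) auto
  obtain A where A: "A \<subseteq> X" "clopen_in X A"
      "X \<inter> (\<lambda>x. Re (f x)) -` {cos (pi * e)..} \<subseteq> A" "A \<inter> (X \<inter> (\<lambda>x. Re (f x)) -` {..cos (2 * pi * e)}) = {}"
    by (rule totally_disconnected_clopen_separation[OF X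
          continuous_closedin_preimage[OF Re_f closed_atLeast]
          continuous_closedin_preimage[OF Re_f closed_atMost]])
      (use cos_less in auto)
  have in_A: "Re (f x) > cos (2 * pi * e)" if "x \<in> A" for x
    using that A(1,4) by auto
  have off_A: "Re (f x) < cos (pi * e)" if "x \<in> X - A" for x
    using that A(3) by auto
  define g where "g x = (if x \<in> A then Arg (f x) / (2 * pi) else Arg2pi (f x) / (2 * pi))" for x
  have cont_Arg: "continuous_on A (\<lambda>x. Arg (f x))"
  proof (intro continuous_intros)
    show "continuous_on A f" using f(1) A(1) continuous_on_subset by blast
    show "f x \<notin> \<real>\<^sub>\<le>\<^sub>0" if "x \<in> A" for x
    proof (rule unit_not_nonpos_Reals)
      show "cmod (f x) = 1" using f(2) A(1) that by auto
      show "Re (f x) > -1" using in_A[OF that] cos_ge_minus_one[of "2 * pi * e"] by linarith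
    qed
  qed
  have cont_Arg2pi: "continuous_on (X - A) (\<lambda>x. Arg2pi (f x))"
  proof (rule continuous_on_compose2[of "- \<real>\<^sub>\<ge>\<^sub>0" Arg2pi])
    show "continuous_on (- \<real>\<^sub>\<ge>\<^sub>0) Arg2pi"
      using continuous_at_Arg2pi by (simp add: continuous_at_imp_continuous_on)
    show "continuous_on (X - A) f" using f(1) continuous_on_subset by blast
    show "f ` (X - A) \<subseteq> - \<real>\<^sub>\<ge>\<^sub>0"
    proof clarify
      fix x assume x: "x \<in> X" "x \<notin> A" "f x \<in> \<real>\<^sub>\<ge>\<^sub>0"
      have "Re (f x) < cos (pi * e)" using off_A x by blast
      then show False
        using unit_not_nonneg_Reals[of "f x"] f(2) x cos_le_one[of "pi * e"] by force
    qed
  qed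
  have "continuous_on (A \<union> (X - A)) g"
    unfolding g_def using A(1,2)
    by (intro continuous_on_cases_local_open continuous_on_divide cont_Arg cont_Arg2pi
        continuous_on_const) (auto simp: clopen_in_def Un_absorb1 openin_diff)
  then have "continuous_on X g" using A(1) by (simp add: Un_absorb1)
  moreover have "exp (2 * pi * \<i> * complex_of_real (g x)) = f x" if "x \<in> X" for x
  proof -
    have "f x \<noteq> 0" using f(2) that by auto
    then show ?thesis
      using Arg_eq[of "f x"] complex_norm_eq_1_exp[of "f x"] f(2) that by (auto simp: g_def)
  qed
  moreover have "- e < g x \<and> g x < 1 - e/2" if "x \<in> X" for x
  proof (cases "x \<in> A")
    case True
    have "\<bar>Arg (f x)\<bar> < 2 * pi * e"
      using abs_Arg_less_of_Re_gt_cos f(2) in_A[OF True] pi_e that by auto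
    then have "\<bar>g x\<bar> < e" using True by (simp add: g_def abs_divide field_simps)
    then show ?thesis using e by auto
  next
    case False
    have "pi * e < Arg2pi (f x) \<and> Arg2pi (f x) < 2 * pi - pi * e"
      using Arg2pi_bounds_of_Re_lt_cos f(2) off_A False pi_e that by auto
    then have "e/2 < g x \<and> g x < 1 - e/2" using False by (simp add: g_def field_simps)
    then show ?thesis using e by auto
  qed
  ultimately show ?thesis using that by blast
qed

lemma eigenvalue_imp_clopen_coboundary:
  fixes X :: "'a::metric_space set" and \<theta> :: real
  assumes X: "compact X" "totally_disconnected X"
    and T: "continuous_on X T" "T ` X \<subseteq> X"
    and \<theta>: "0 < \<theta>" "\<theta> < 1"
    and "continuous_eigenvalue X T (exp (2 * pi * \<i> * complex_of_real \<theta>))"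
  obtains U where "U \<subseteq> X" "clopen_in X U" "real_coboundary X T (\<lambda>x. indicator U x - \<theta>)"
proof -
  obtain f where f: "continuous_on X f" "\<forall>x\<in>X. cmod (f x) = 1"
    and f_T: "\<forall>x\<in>X. f (T x) = exp (2 * pi * \<i> * complex_of_real \<theta>) * f x"
    using assms(7) unfolding continuous_eigenvalue_def by blast
  define e where "e = min \<theta> (1 - \<theta>)"
  have e: "0 < e" "e \<le> 1/2" "e \<le> \<theta>" "e \<le> 1 - \<theta>" using \<theta> by (auto simp: e_def min_def)
  obtain g where g: "continuous_on X g" and f_g: "\<forall>x\<in>X. exp (2 * pi * \<i> * complex_of_real (g x)) = f x"
    and g_bounds: "\<forall>x\<in>X. - e < g x \<and> g x < 1 - e/2"
    using totally_disconnected_circle_lift[OF X f e(1,2)] by blast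
  define k where "k x = g (T x) - g x - \<theta>" for x
  have k_cont: "continuous_on X k"
    unfolding k_def by (intro continuous_intros g continuous_on_compose2[OF g T])
  have k_values: "k x = 0 \<or> k x = -1" if x: "x \<in> X" for x
  proof -
    have Tx: "T x \<in> X" using T(2) x by auto
    have "exp (2 * pi * \<i> * complex_of_real (g (T x))) = exp (2 * pi * \<i> * complex_of_real (\<theta> + g x))"
      using f_g f_T x Tx by (simp add: distrib_left exp_add)
    then obtain n :: int where n: "k x = of_int n"
      unfolding exp_2pi_i_eq_iff k_def by (auto simp: algebra_simps elim: Ints_cases)
    have "-e < g (T x)" "g (T x) < 1 - e/2" "-e < g x" "g x < 1 - e/2"
      using g_bounds x Tx by auto
    then have "n = 0 \<or> n = -1" using e n unfolding k_def by linarith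
    then show ?thesis using n by auto
  qed
  define U where "U = X \<inter> k -` {..< -1/2}"
  have U_closed_form: "U = X \<inter> k -` {.. -1/2}"
    unfolding U_def using k_values by fastforce
  have "clopen_in X U"
    unfolding clopen_in_def
  proof
    show "openin (top_of_set X) U"
      unfolding U_def by (rule continuous_openin_preimage_gen[OF k_cont open_lessThan])
    show "closedin (top_of_set X) U"
      unfolding U_closed_form by (rule continuous_closedin_preimage[OF k_cont closed_atMost])
  qed
  moreover have "indicator U x - \<theta> = g x - g (T x)" if "x \<in> X" for x
    using k_values[OF that] that by (auto simp: U_def k_def indicator_def)
  ultimately show ?thesis
    using that g unfolding real_coboundary_def U_def by blast
qed

lemma indicator_coboundary_imp_eigenvalue:
  fixes \<theta> :: real
  assumes "real_coboundary X T (\<lambda>x. indicator U x - \<theta>)"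
  shows "continuous_eigenvalue X T (exp (2 * pi * \<i> * complex_of_real \<theta>))"
proof -
  obtain F where F: "continuous_on X F" "\<forall>x\<in>X. indicator U x - \<theta> = F x - F (T x)"
    using assms unfolding real_coboundary_def by blast
  have "exp (2 * pi * \<i> * complex_of_real (F (T x))) = exp (2 * pi * \<i> * complex_of_real (\<theta> + F x))" if "x \<in> X" for x
  proof -
    have "F (T x) - (\<theta> + F x) = - indicator U x" using F(2) that by force
    then show ?thesis unfolding exp_2pi_i_eq_iff by (simp add: indicator_def)
  qed
  then show ?thesis
    unfolding continuous_eigenvalue_def
    by (intro exI[of _ "\<lambda>x. exp (2 * pi * \<i> * complex_of_real (F x))"])
      (auto simp: norm_exp_eq_Re distrib_left exp_add intro!: continuous_intros F(1))
qed

lemma integral_coboundary_eq_0: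
  fixes F :: "'a::metric_space \<Rightarrow> real"
  assumes "compact X" "continuous_on X F" "invariant_borel_prob X T \<mu>"
  shows "(\<integral>x. F x - F (T x) \<partial>\<mu>) = 0"
proof -
  have sets: "sets \<mu> = sets (restrict_space borel X)"
    and T: "T \<in> measurable \<mu> \<mu>" "distr \<mu> \<mu> T = \<mu>"
    using assms(3) unfolding invariant_borel_prob_def by auto
  interpret prob_space \<mu> using assms(3) unfolding invariant_borel_prob_def by blast
  have space: "space \<mu> = X"
    using sets_eq_imp_space_eq[OF sets] by (simp add: space_restrict_space)
  have F_meas: "F \<in> borel_measurable \<mu>"
    using borel_measurable_continuous_on_restrict[OF assms(2)] measurable_cong_sets[OF sets refl]
    by blast
  obtain B where "\<forall>x\<in>X. norm (F x) \<le> B"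
    using compact_imp_bounded[OF compact_continuous_image[OF assms(2,1)]]
    by (auto simp: bounded_iff)
  then have F_int: "integrable \<mu> F"
    by (intro integrable_const_bound[where B=B]) (auto simp: space F_meas)
  have "(\<integral>x. F (T x) \<partial>\<mu>) = (\<integral>x. F x \<partial>\<mu>)"
    using integral_distr[OF T(1) F_meas] T(2) by simp
  moreover have "integrable \<mu> (\<lambda>x. F (T x))"
    using integrable_distr_eq[OF T(1) F_meas] F_int T(2) by simp
  ultimately show ?thesis using F_int by simp
qed

lemma measure_eq_of_indicator_coboundary:
  fixes X :: "'a::metric_space set" and \<theta> :: real
  assumes "compact X" "closedin (top_of_set X) U"
    and "real_coboundary X T (\<lambda>x. indicator U x - \<theta>)" "invariant_borel_prob X T \<mu>"
  shows "measure \<mu> U = \<theta>"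
proof -
  obtain F where F: "continuous_on X F" "\<forall>x\<in>X. indicator U x - \<theta> = F x - F (T x)"
    using assms(3) unfolding real_coboundary_def by blast
  have sets: "sets \<mu> = sets (restrict_space borel X)"
    using assms(4) unfolding invariant_borel_prob_def by auto
  interpret prob_space \<mu> using assms(4) unfolding invariant_borel_prob_def by blast
  have space: "space \<mu> = X"
    using sets_eq_imp_space_eq[OF sets] by (simp add: space_restrict_space)
  have "closed U" using closedin_closed_trans[OF assms(2) compact_imp_closed[OF assms(1)]] .
  moreover have "U = X \<inter> U" using closedin_imp_subset[OF assms(2)] by blast
  ultimately have U: "U \<in> sets \<mu>"
    unfolding sets sets_restrict_space by (auto intro: image_eqI)
  have "integrable \<mu> (indicator U :: 'a \<Rightarrow> real)"
    using U by (simp add: emeasure_eq_measure)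
  then have "measure \<mu> U - \<theta> = (\<integral>x. indicator U x - \<theta> \<partial>\<mu>)"
    using U by (simp add: Bochner_Integration.integral_diff prob_space)
  also have "\<dots> = (\<integral>x. F x - F (T x) \<partial>\<mu>)"
    using F(2) by (intro Bochner_Integration.integral_cong) (auto simp: space)
  also have "\<dots> = 0"
    using integral_coboundary_eq_0[OF assms(1) F(1) assms(4)] .
  finally show ?thesis by simp
qed

theorem mainTheorem1:
  fixes X :: "'a::metric_space set" and T :: "'a \<Rightarrow> 'a" and \<theta> :: real
  assumes "compact X"
    and "\<exists>g. homeomorphism X X T g"
    and "top_transitive X T"
    and "totally_disconnected X"
    and "0 < \<theta>" and "\<theta> < 1"
  shows "(continuous_eigenvalue X T (exp (2 * pi * \<i> * complex_of_real \<theta>)) \<longleftrightarrow>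
           (\<exists>U. U \<subseteq> X \<and> clopen_in X U \<and> real_coboundary X T (\<lambda>x. indicator U x - \<theta>)))
       \<and> (\<forall>U \<mu>. U \<subseteq> X \<and> clopen_in X U \<and> real_coboundary X T (\<lambda>x. indicator U x - \<theta>)
              \<and> invariant_borel_prob X T \<mu> \<longrightarrow> measure \<mu> U = \<theta>)"
proof -
  obtain g where "homeomorphism X X T g" using assms(2) by blast
  then have T: "continuous_on X T" "T ` X \<subseteq> X" unfolding homeomorphism_def by auto
  have "continuous_eigenvalue X T (exp (2 * pi * \<i> * complex_of_real \<theta>)) \<longleftrightarrow>
      (\<exists>U. U \<subseteq> X \<and> clopen_in X U \<and> real_coboundary X T (\<lambda>x. indicator U x - \<theta>))"
  proof
    assume "continuous_eigenvalue X T (exp (2 * pi * \<i> * complex_of_real \<theta>))"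
    then obtain U where "U \<subseteq> X" "clopen_in X U" "real_coboundary X T (\<lambda>x. indicator U x - \<theta>)"
      by (rule eigenvalue_imp_clopen_coboundary[OF assms(1,4) T assms(5,6)])
    then show "\<exists>U. U \<subseteq> X \<and> clopen_in X U \<and> real_coboundary X T (\<lambda>x. indicator U x - \<theta>)"
      by blast
  next
    assume "\<exists>U. U \<subseteq> X \<and> clopen_in X U \<and> real_coboundary X T (\<lambda>x. indicator U x - \<theta>)"
    then show "continuous_eigenvalue X T (exp (2 * pi * \<i> * complex_of_real \<theta>))"
      using indicator_coboundary_imp_eigenvalue by blast
  qed
  moreover have "\<forall>U \<mu>. U \<subseteq> X \<and> clopen_in X U \<and> real_coboundary X T (\<lambda>x. indicator U x - \<theta>)
      \<and> invariant_borel_prob X T \<mu> \<longrightarrow> measure \<mu> U = \<theta>"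
    using measure_eq_of_indicator_coboundary[OF assms(1)] by (auto simp: clopen_in_def)
  ultimately show ?thesis by blast
qed

end
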